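(* Let $N\ge3$ and for $1\le k<N/2$ let $s_k=\tan(k\pi/N)$. Then every $s_k$ with $1\le k<N/2$ and $\gcd(k,N)>1$ can be written as a $\mathbb{Q}$-linear combination of the $s_j$ with $1\le j<N/2$ and $\gcd(j,N)=1$.
   Context: The $s_k$ with $\gcd(k,N)=1$ are called primitive star points and those with $\gcd(k,N)>1$ degenerate star points of the regular $N$-gon. *)

theory Defs
  imports Complex_Main
begin

definition star_point :: "nat \<Rightarrow> nat \<Rightarrow> real" where
  "star_point N k = tan (real k * pi / real N)"

end

theory Submission
  imports Defs "HOL-Number_Theory.Number_Theory"
begin

text \<open>
  Write \<open>T\<^sub>N(x) = tan (x pi / N)\<close> and \<open>V\<^sub>N\<close> for the \<open>\<rat>\<close>-span of the primitive star points.
  If \<open>h = gcd k N\<close>, then \<open>s\<^sub>k = T\<^sub>M(k / h)\<close> with \<open>M = N / h \<ge> 3\<close>, and \<open>T\<^sub>M(u) \<in> V\<^sub>M\<close> for every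
  unit \<open>u\<close> modulo \<open>M\<close> (it is \<open>\<plusminus>\<close> a primitive star point). So it suffices to show
  \<open>T\<^sub>M(u) \<in> V\<^sub>p\<^sub>M\<close> for every prime \<open>p\<close>.

  For odd \<open>p\<close> use \<open>p tan (p t) = (\<Sum>m<p. tan (t + m pi / p))\<close>. If \<open>p\<close> divides \<open>M\<close>, all
  terms on the right are primitive at level \<open>p M\<close>. Otherwise exactly one is not, which gives
  \<open>p T\<^sub>M(p w) - T\<^sub>M(w) \<in> V\<^sub>p\<^sub>M\<close>; along the orbit \<open>u, p u, p\<^sup>2 u, \<dots>\<close>, which closes after
  \<open>L = totient M\<close> steps, these relations telescope to \<open>(p\<^sup>L - 1) T\<^sub>M(u) \<in> V\<^sub>p\<^sub>M\<close>.
  For \<open>p = 2\<close> the identity \<open>cot x - tan x = 2 cot (2 x)\<close> does the job directly when \<open>M\<close> is odd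
  or divisible by 4, and via the same orbit argument when \<open>M \<equiv> 2 (mod 4)\<close>.
\<close>

section \<open>Trigonometric identities\<close>

lemma one_plus_cis_double: "1 + cis (2 * x) = 2 * complex_of_real (cos x) * cis x"
  by (simp add: complex_eq_iff cos_double_cos power2_eq_square sin_double)

lemma one_plus_cis_double_eq_0_iff: "1 + cis (2 * x) = 0 \<longleftrightarrow> cos x = 0"
  by (simp add: one_plus_cis_double)

lemma cis_double_minus_one: "cis (2 * x) - 1 = 2 * \<i> * complex_of_real (sin x) * cis x"
  by (simp add: complex_eq_iff cos_double_sin power2_eq_square sin_double)

lemma tan_eq_cis_double:
  assumes "cos x \<noteq> 0"
  shows "complex_of_real (tan x) = - \<i> * (1 - 2 / (1 + cis (2 * x)))"
proof -
  have "1 + cis (2 * x) \<noteq> 0" using assms by (simp add: one_plus_cis_double_eq_0_iff)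
  then have "1 - 2 / (1 + cis (2 * x)) = (cis (2 * x) - 1) / (1 + cis (2 * x))"
    by (simp add: field_simps)
  also have "\<dots> = \<i> * complex_of_real (tan x)"
    unfolding one_plus_cis_double cis_double_minus_one using assms by (simp add: tan_def)
  finally show ?thesis by simp
qed

lemma sum_inverse_one_minus_mult_roots_unity:
  fixes a :: complex
  assumes p: "p > 0" and ap: "a ^ p \<noteq> 1"
  defines "\<zeta> \<equiv> cis (2 * pi / p)"
  shows "(\<Sum>m<p. 1 / (1 - a * \<zeta> ^ m)) = of_nat p / (1 - a ^ p)"
proof -
  have \<zeta>_pow: "\<zeta> ^ n = cis (2 * pi * real n / real p)" for n
    by (simp add: \<zeta>_def DeMoivre mult_ac)
  have \<zeta>_pow_p: "(\<zeta> ^ m) ^ p = 1" for m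
    using p by (simp add: \<zeta>_pow DeMoivre flip: power_mult)
  have \<zeta>_pow_ne_1: "\<zeta> ^ n \<noteq> 1" if "0 < n" "n < p" for n
    using inj_onD[OF bij_betw_imp_inj_on[OF bij_betw_roots_unity[OF p]], of n 0] that
    by (auto simp: \<zeta>_pow)
  have geometric: "1 / (1 - a * \<zeta> ^ m) = (\<Sum>n<p. a ^ n * (\<zeta> ^ m) ^ n) / (1 - a ^ p)" for m
  proof -
    have "(1 - a * \<zeta> ^ m) * (\<Sum>n<p. (a * \<zeta> ^ m) ^ n) = 1 - (a * \<zeta> ^ m) ^ p"
      by (rule one_diff_power_eq[symmetric])
    also have "\<dots> = 1 - a ^ p"
      using \<zeta>_pow_p[of m] by (simp add: power_mult_distrib)
    finally have sum_eq: "(1 - a * \<zeta> ^ m) * (\<Sum>n<p. a ^ n * (\<zeta> ^ m) ^ n) = 1 - a ^ p"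
      by (simp add: power_mult_distrib)
    moreover have "1 - a * \<zeta> ^ m \<noteq> 0"
      using sum_eq ap by auto
    ultimately show ?thesis
      using ap by (simp add: field_simps)
  qed
  have orthogonality: "(\<Sum>m<p. (\<zeta> ^ m) ^ n) = (if n = 0 then of_nat p else 0)" if "n < p" for n
  proof (cases "n = 0")
    case False
    have "(\<Sum>m<p. (\<zeta> ^ m) ^ n) = (\<Sum>m<p. (\<zeta> ^ n) ^ m)"
      by (metis power_mult mult.commute)
    then show ?thesis
      using \<zeta>_pow_ne_1[of n] \<zeta>_pow_p[of n] False that by (simp add: sum_gp_strict)
  qed simp
  have "(\<Sum>m<p. 1 / (1 - a * \<zeta> ^ m)) = (\<Sum>m<p. \<Sum>n<p. a ^ n * (\<zeta> ^ m) ^ n) / (1 - a ^ p)"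
    by (simp add: geometric sum_divide_distrib)
  also have "(\<Sum>m<p. \<Sum>n<p. a ^ n * (\<zeta> ^ m) ^ n) = (\<Sum>n<p. a ^ n * (\<Sum>m<p. (\<zeta> ^ m) ^ n))"
    by (subst sum.swap) (simp add: sum_distrib_left)
  also have "\<dots> = (\<Sum>n<p. if n = 0 then of_nat p else 0)"
    by (rule sum.cong) (auto simp: orthogonality)
  also have "\<dots> = of_nat p"
    using p by simp
  finally show ?thesis .
qed

lemma tan_sum_odd_shifts:
  fixes p :: nat and t :: real
  assumes p: "odd p" and cos_pt: "cos (p * t) \<noteq> 0"
  shows "(\<Sum>m<p. tan (t + m * pi / p)) = p * tan (p * t)"
proof -
  define \<zeta> where "\<zeta> = cis (2 * pi / p)"
  define a where "a = - cis (2 * t)"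
  have p0: "p > 0" using p by (cases p) auto
  have one_plus_shift: "1 + cis (2 * (t + m * pi / p)) = 1 - a * \<zeta> ^ m" for m
  proof -
    have "cis (2 * (t + m * pi / p)) = cis (2 * t + m * (2 * pi / p))"
      by (rule arg_cong[where f = cis]) (simp add: field_simps)
    also have "\<dots> = cis (2 * t) * \<zeta> ^ m"
      unfolding \<zeta>_def DeMoivre cis_mult ..
    finally show ?thesis by (simp add: a_def)
  qed
  have a_pow: "a ^ p = - cis (2 * (p * t))"
    using p by (simp add: a_def DeMoivre mult_ac)
  have a_pow_ne_1: "a ^ p \<noteq> 1"
    using cos_pt one_plus_cis_double_eq_0_iff[of "p * t"] by (auto simp: a_pow add_eq_0_iff minus_equation_iff)
  have cos_shift: "cos (t + m * pi / p) \<noteq> 0" for m :: nat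
  proof
    assume "cos (t + m * pi / p) = 0"
    then have "a * \<zeta> ^ m = 1"
      using one_plus_cis_double_eq_0_iff one_plus_shift by (metis eq_iff_diff_eq_0)
    then have "a ^ p * (\<zeta> ^ p) ^ m = 1"
      by (metis power_mult_distrib power_one power_mult mult.commute)
    then show False using a_pow_ne_1 p0 by (simp add: \<zeta>_def DeMoivre)
  qed
  have "complex_of_real (\<Sum>m<p. tan (t + m * pi / p)) = (\<Sum>m<p. - \<i> * (1 - 2 / (1 - a * \<zeta> ^ m)))"
    by (simp only: of_real_sum tan_eq_cis_double[OF cos_shift] one_plus_shift)
  also have "\<dots> = - \<i> * (of_nat p - 2 * (\<Sum>m<p. 1 / (1 - a * \<zeta> ^ m)))"
    by (simp add: sum_distrib_left sum_subtractf sum_negf algebra_simps flip: sum_divide_distrib)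
  also have "\<dots> = - \<i> * of_nat p * (1 - 2 / (1 + cis (2 * (p * t))))"
    unfolding \<zeta>_def sum_inverse_one_minus_mult_roots_unity[OF p0 a_pow_ne_1]
    by (simp add: a_pow algebra_simps)
  also have "\<dots> = complex_of_real (p * tan (p * t))"
    by (simp add: tan_eq_cis_double[OF cos_pt])
  finally show ?thesis by (simp only: of_real_eq_iff)
qed

lemma cot_minus_tan:
  fixes x :: real
  assumes "sin (2 * x) \<noteq> 0"
  shows "cot x - tan x = 2 * cot (2 * x)"
proof -
  have "sin x \<noteq> 0" "cos x \<noteq> 0" using assms by (auto simp: sin_double)
  then show ?thesis
    unfolding cot_def tan_def sin_double cos_double by (simp add: field_simps power2_eq_square)
qed

lemma tan_add_pi_half: "tan (x + pi / 2) = - cot x"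
  by (simp add: tan_def cot_def sin_add cos_add)

lemma cot_add_pi_half: "cot (x + pi / 2) = - tan x"
  by (simp add: tan_def cot_def sin_add cos_add)

section \<open>Tangents of rational multiples of \<open>pi\<close>\<close>

definition tan_pi_frac :: "nat \<Rightarrow> int \<Rightarrow> real" where
  "tan_pi_frac N x = tan (of_int x * pi / real N)"

lemma star_point_eq_tan_pi_frac: "star_point N j = tan_pi_frac N (int j)"
  by (simp add: star_point_def tan_pi_frac_def)

lemma tan_pi_frac_add_multiple: "N > 0 \<Longrightarrow> tan_pi_frac N (x + int N * k) = tan_pi_frac N x"
proof -
  assume "N > 0"
  then have "of_int (x + int N * k) * pi / real N = of_int x * pi / real N + of_int k * pi"
    by (simp add: field_simps)
  then show ?thesis by (simp add: tan_pi_frac_def)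
qed

lemma tan_pi_frac_cong: "N > 0 \<Longrightarrow> [x = y] (mod int N) \<Longrightarrow> tan_pi_frac N x = tan_pi_frac N y"
  by (metis tan_pi_frac_add_multiple cong_iff_lin)

lemma tan_pi_frac_uminus: "tan_pi_frac N (- x) = - tan_pi_frac N x"
  by (simp add: tan_pi_frac_def)

lemma tan_pi_frac_mult_level: "d > 0 \<Longrightarrow> tan_pi_frac (d * N) (int d * x) = tan_pi_frac N x"
  by (simp add: tan_pi_frac_def field_simps)

lemma sin_pi_frac_eq_0_iff:
  assumes "N > 0"
  shows "sin (of_int x * pi / real N) = 0 \<longleftrightarrow> int N dvd x"
proof
  assume "sin (of_int x * pi / real N) = 0"
  then obtain k :: int where "of_int x * pi / real N = of_int k * pi"
    by (auto simp: sin_zero_iff_int2)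
  then have "real_of_int x = real_of_int (int N * k)"
    using assms by (simp add: field_simps)
  then show "int N dvd x" by (simp only: of_int_eq_iff) simp
next
  assume "int N dvd x"
  then obtain k where "x = int N * k" by (elim dvdE)
  then have "of_int x * pi / real N = of_int k * pi"
    using assms by (simp add: field_simps)
  then show "sin (of_int x * pi / real N) = 0" by (simp add: sin_zero_iff_int2)
qed

lemma sin_double_pi_frac_neq_0:
  assumes "N > 0" and "\<not> int N dvd 2 * x"
  shows "sin (2 * (of_int x * pi / real N)) \<noteq> 0"
proof -
  have "sin (of_int (2 * x) * pi / real N) \<noteq> 0"
    using assms by (simp only: sin_pi_frac_eq_0_iff not_False_eq_True)
  moreover have "of_int (2 * x) * pi / real N = 2 * (of_int x * pi / real N)" by simp
  ultimately show ?thesis by metis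
qed

lemma cos_pi_frac_neq_0:
  assumes "N > 0" and "\<not> int N dvd 2 * x"
  shows "cos (of_int x * pi / real N) \<noteq> 0"
  using sin_double_pi_frac_neq_0[OF assms] unfolding sin_double by auto

lemma not_dvd_double_if_coprime:
  assumes "N \<ge> 3" and "coprime x (int N)"
  shows "\<not> int N dvd 2 * x"
proof
  assume "int N dvd 2 * x"
  with assms(2) have "int N dvd 2" by (simp add: coprime_commute coprime_dvd_mult_left_iff)
  then show False using assms(1) by (auto dest: zdvd_imp_le)
qed

lemma tan_pi_frac_odd_shifts:
  assumes "odd p" and "M > 0" and "\<not> int M dvd 2 * z"
  shows "real p * tan_pi_frac M z = (\<Sum>m<p. tan_pi_frac (p * M) (z + int m * int M))"
proof -
  have "p > 0" using assms(1) by (cases p) auto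
  define t where "t = of_int z * pi / real (p * M)"
  have pt: "real p * t = of_int z * pi / real M"
    using \<open>p > 0\<close> by (simp add: t_def)
  have "(\<Sum>m<p. tan (t + m * pi / p)) = p * tan (p * t)"
    using tan_sum_odd_shifts[OF assms(1)] cos_pi_frac_neq_0[OF assms(2,3)] by (simp add: pt)
  moreover have "t + m * pi / p = of_int (z + int m * int M) * pi / real (p * M)" for m :: nat
    using \<open>p > 0\<close> assms(2) by (simp add: t_def field_simps)
  ultimately show ?thesis by (simp add: tan_pi_frac_def pt)
qed

lemma tan_pi_frac_reflection:
  assumes "M > 0" and "\<not> int M dvd 2 * u"
  shows "tan_pi_frac M u = tan_pi_frac (2 * M) (int M - 2 * u) + 2 * tan_pi_frac (2 * M) (4 * u - int M)"
proof -
  define x where "x = of_int u * pi / real M"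
  have "cot x - tan x = 2 * cot (2 * x)"
    using sin_double_pi_frac_neq_0[OF assms] unfolding x_def by (rule cot_minus_tan)
  moreover have "cot x = tan_pi_frac (2 * M) (int M - 2 * u)"
    using assms by (simp add: tan_pi_frac_def x_def flip: tan_cot') (simp add: field_simps)
  moreover have "cot (2 * x) = - tan_pi_frac (2 * M) (4 * u - int M)"
  proof -
    have "2 * x = of_int (4 * u - int M) * pi / real (2 * M) + pi / 2"
      using assms by (simp add: x_def field_simps)
    then show ?thesis by (simp add: tan_pi_frac_def cot_add_pi_half)
  qed
  moreover have "tan_pi_frac M u = tan x" by (simp add: tan_pi_frac_def x_def)
  ultimately show ?thesis by linarith
qed

lemma tan_pi_frac_quarter_shifts:
  assumes "n > 0" and "\<not> int n dvd x"
  shows "2 * tan_pi_frac (2 * n) x = tan_pi_frac (4 * n) (x + int n) + tan_pi_frac (4 * n) (x + 3 * int n)"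
proof -
  define b where "b = of_int (x + int n) * pi / real (4 * n)"
  have "\<not> int (4 * n) dvd 2 * (x + int n)"
  proof
    assume "int (4 * n) dvd 2 * (x + int n)"
    then obtain k where "2 * (x + int n) = int (4 * n) * k" by (elim dvdE)
    then have "x = int n * (2 * k - 1)" by (simp add: algebra_simps)
    with assms(2) show False by simp
  qed
  then have "sin (2 * b) \<noteq> 0"
    unfolding b_def using assms(1) by (intro sin_double_pi_frac_neq_0) simp_all
  then have "cot b - tan b = 2 * cot (2 * b)" by (rule cot_minus_tan)
  moreover have "tan_pi_frac (4 * n) (x + 3 * int n) = - cot b"
  proof -
    have "of_int (x + 3 * int n) * pi / real (4 * n) = b + pi / 2"
      using assms by (simp add: b_def field_simps)
    then show ?thesis by (simp add: tan_pi_frac_def tan_add_pi_half)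
  qed
  moreover have "cot (2 * b) = - tan_pi_frac (2 * n) x"
  proof -
    have "2 * b = of_int x * pi / real (2 * n) + pi / 2"
      using assms by (simp add: b_def field_simps)
    then show ?thesis by (simp add: tan_pi_frac_def cot_add_pi_half)
  qed
  moreover have "tan_pi_frac (4 * n) (x + int n) = tan b" by (simp add: tan_pi_frac_def b_def)
  ultimately show ?thesis by linarith
qed

section \<open>The rational span of the primitive star points\<close>

definition primitive_indices :: "nat \<Rightarrow> nat set" where
  "primitive_indices N = {j. 1 \<le> j \<and> 2 * j < N \<and> gcd j N = 1}"

definition star_span :: "nat \<Rightarrow> real set" where
  "star_span N = range (\<lambda>c :: nat \<Rightarrow> rat. \<Sum>j\<in>primitive_indices N. of_rat (c j) * star_point N j)"

lemma finite_primitive_indices: "finite (primitive_indices N)"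
  by (rule finite_subset[of _ "{..<N}"]) (auto simp: primitive_indices_def)

lemma star_span_zero: "0 \<in> star_span N"
  unfolding star_span_def by (rule range_eqI[of _ _ "\<lambda>_. 0"]) simp

lemma star_span_add:
  assumes "r \<in> star_span N" and "s \<in> star_span N"
  shows "r + s \<in> star_span N"
proof -
  obtain c d where "r = (\<Sum>j\<in>primitive_indices N. of_rat (c j) * star_point N j)"
    and "s = (\<Sum>j\<in>primitive_indices N. of_rat (d j) * star_point N j)"
    using assms unfolding star_span_def by blast
  then show ?thesis
    unfolding star_span_def
    by (intro range_eqI[of _ _ "\<lambda>j. c j + d j"]) (simp add: of_rat_add distrib_right sum.distrib)
qed

lemma star_span_rat_mult:
  assumes "r \<in> star_span N"
  shows "of_rat q * r \<in> star_span N"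
proof -
  obtain c where "r = (\<Sum>j\<in>primitive_indices N. of_rat (c j) * star_point N j)"
    using assms unfolding star_span_def by blast
  then show ?thesis
    unfolding star_span_def
    by (intro range_eqI[of _ _ "\<lambda>j. q * c j"]) (simp add: of_rat_mult sum_distrib_left mult.assoc)
qed

lemma star_span_rat_mult_cancel: "of_rat q * r \<in> star_span N \<Longrightarrow> q \<noteq> 0 \<Longrightarrow> r \<in> star_span N"
  using star_span_rat_mult[of "of_rat q * r" N "inverse q"] by (simp add: of_rat_inverse mult.assoc[symmetric])

lemma star_span_uminus: "r \<in> star_span N \<Longrightarrow> - r \<in> star_span N"
  using star_span_rat_mult[of r N "-1"] by simp

lemma star_span_sum: "(\<And>a. a \<in> A \<Longrightarrow> f a \<in> star_span N) \<Longrightarrow> (\<Sum>a\<in>A. f a) \<in> star_span N"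
  by (induction A rule: infinite_finite_induct) (auto intro: star_span_zero star_span_add)

lemma star_point_in_star_span:
  assumes "j \<in> primitive_indices N"
  shows "star_point N j \<in> star_span N"
proof -
  have "(\<Sum>i\<in>primitive_indices N. of_rat (if i = j then 1 else 0) * star_point N i)
      = (\<Sum>i\<in>primitive_indices N. if i = j then star_point N i else 0)"
    by (rule sum.cong) simp_all
  also have "\<dots> = star_point N j"
    using assms finite_primitive_indices by simp
  finally show ?thesis
    unfolding star_span_def by (intro range_eqI[of _ _ "\<lambda>i. if i = j then 1 else 0"]) simp
qed

lemma tan_pi_frac_in_star_span:
  assumes N: "N \<ge> 3" and x: "coprime x (int N)"
  shows "tan_pi_frac N x \<in> star_span N"
proof -
  define j where "j = nat (x mod int N)"
  have "j < N" using N by (simp add: j_def nat_less_iff)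
  have x_j: "tan_pi_frac N x = tan_pi_frac N (int j)"
    using N by (intro tan_pi_frac_cong) (simp_all add: j_def cong_def)
  have "coprime (int j) (int N)"
    using x N by (simp add: j_def)
  then have j_N: "coprime j N" by simp
  have "j \<noteq> 0"
  proof
    assume "j = 0"
    with j_N have "N = 1" by simp
    with N show False by simp
  qed
  have "2 * j \<noteq> N"
  proof
    assume "2 * j = N"
    then have "j dvd N" by auto
    with j_N have "j = 1" by (simp add: coprime_absorb_left)
    with \<open>2 * j = N\<close> N show False by simp
  qed
  consider "2 * j < N" | "N < 2 * j" using \<open>2 * j \<noteq> N\<close> by linarith
  then show ?thesis
  proof cases
    case 1
    with \<open>j \<noteq> 0\<close> j_N have "j \<in> primitive_indices N"
      by (simp add: primitive_indices_def)
    then have "star_point N j \<in> star_span N" by (rule star_point_in_star_span)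
    then show ?thesis by (simp only: x_j star_point_eq_tan_pi_frac)
  next
    case 2
    from j_N \<open>j < N\<close> have "gcd (N - j) N = 1"
      by (simp add: gcd_diff2_nat)
    with 2 \<open>j < N\<close> have "N - j \<in> primitive_indices N"
      by (simp add: primitive_indices_def) linarith
    then have "- star_point N (N - j) \<in> star_span N"
      by (intro star_span_uminus star_point_in_star_span)
    moreover have "int j = - int (N - j) + int N * 1"
      using \<open>j < N\<close> by simp
    then have "tan_pi_frac N (int j) = - star_point N (N - j)"
      using N by (simp only: tan_pi_frac_add_multiple tan_pi_frac_uminus star_point_eq_tan_pi_frac)
    ultimately show ?thesis by (simp only: x_j)
  qed
qed

lemma star_span_cycle:
  fixes G :: "nat \<Rightarrow> real" and c :: rat
  assumes step: "\<And>i. i < L \<Longrightarrow> of_rat c * G (Suc i) - G i \<in> star_span N"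
    and period: "G L = G 0" and "c ^ L \<noteq> 1"
  shows "G 0 \<in> star_span N"
proof -
  have "(\<Sum>i<L. of_rat (c ^ i) * (of_rat c * G (Suc i) - G i)) \<in> star_span N"
    by (intro star_span_sum star_span_rat_mult step) simp
  also have "(\<Sum>i<L. of_rat (c ^ i) * (of_rat c * G (Suc i) - G i))
      = (\<Sum>i<L. of_rat (c ^ Suc i) * G (Suc i) - of_rat (c ^ i) * G i)"
    by (simp add: algebra_simps of_rat_mult)
  also have "\<dots> = of_rat (c ^ L) * G L - of_rat (c ^ 0) * G 0"
    by (rule sum_lessThan_telescope)
  also have "\<dots> = of_rat (c ^ L - 1) * G 0"
    by (simp add: period of_rat_diff algebra_simps)
  finally show ?thesis
    using \<open>c ^ L \<noteq> 1\<close> star_span_rat_mult_cancel by simp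
qed

section \<open>From level \<open>M\<close> to level \<open>p * M\<close>\<close>

lemma coprime_four_if_odd: "odd (x :: int) \<Longrightarrow> coprime x 4"
  using coprime_power_right_iff[of x 2 2] by simp

lemma coprime_add_mult_left_iff: "coprime (x + y * m) m \<longleftrightarrow> coprime x (m :: int)"
  using gcd_add_mult[of m y x] by (simp add: coprime_iff_gcd_eq_1 gcd.commute add.commute)

lemma euler_theorem_int: "coprime a m \<Longrightarrow> [int a ^ totient m = 1] (mod int m)"
  using euler_theorem[of a m] by (metis cong_int_iff of_nat_1 of_nat_power)

lemma tan_pi_frac_in_star_span_odd_prime_dvd:
  assumes "prime p" and "odd p" and "p dvd M" and M: "M \<ge> 3" and u: "coprime u (int M)"
  shows "tan_pi_frac M u \<in> star_span (p * M)"
proof -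
  have "p \<ge> 2" using \<open>prime p\<close> by (simp add: prime_ge_2_nat)
  then have "M \<le> p * M" by simp
  have u_p: "coprime u (int p)"
    using \<open>p dvd M\<close> by (intro coprime_divisors[OF dvd_refl _ u]) simp
  have "(\<Sum>m<p. tan_pi_frac (p * M) (u + int m * int M)) \<in> star_span (p * M)"
  proof (intro star_span_sum tan_pi_frac_in_star_span)
    fix m
    have "coprime (u + int m * int M) (int M)" using u by (simp add: coprime_add_mult_left_iff)
    moreover obtain k where "M = p * k" using \<open>p dvd M\<close> by (elim dvdE)
    then have "coprime (u + int m * int M) (int p)"
      using u_p coprime_add_mult_left_iff[of u "int m * int k" "int p"] by (simp add: mult_ac)
    ultimately show "coprime (u + int m * int M) (int (p * M))" by simp
    show "p * M \<ge> 3" using \<open>M \<le> p * M\<close> M by linarith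
  qed
  then have "of_rat (of_nat p) * tan_pi_frac M u \<in> star_span (p * M)"
    using tan_pi_frac_odd_shifts[OF \<open>odd p\<close>] M not_dvd_double_if_coprime[OF M u] by simp
  then show ?thesis
    by (rule star_span_rat_mult_cancel) (use \<open>p \<ge> 2\<close> in simp)
qed

lemma tan_pi_frac_odd_prime_relation:
  assumes "prime p" and "odd p" and "\<not> p dvd M" and M: "M \<ge> 3" and w: "coprime w (int M)"
  shows "real p * tan_pi_frac M (int p * w) - tan_pi_frac M w \<in> star_span (p * M)"
proof -
  have "p \<ge> 2" using \<open>prime p\<close> by (simp add: prime_ge_2_nat)
  then have "M \<le> p * M" by simp
  then have pM: "p * M \<ge> 3" using M by linarith
  have pw: "coprime (int p * w) (int M)"
    using w \<open>prime p\<close> \<open>\<not> p dvd M\<close> by (simp add: prime_imp_coprime)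
  \<comment> \<open>Of the shifts \<open>p * w + m * M\<close>, \<open>m < p\<close>, only the one with \<open>m = 0\<close> is divisible by \<open>p\<close>.\<close>
  obtain q where q: "p = Suc q" using \<open>p \<ge> 2\<close> by (cases p) auto
  have "real p * tan_pi_frac M (int p * w) = (\<Sum>m<p. tan_pi_frac (p * M) (int p * w + int m * int M))"
    using tan_pi_frac_odd_shifts[OF \<open>odd p\<close>] M not_dvd_double_if_coprime[OF M pw] by simp
  also have "\<dots> = tan_pi_frac (p * M) (int p * w + int 0 * int M)
      + (\<Sum>i<q. tan_pi_frac (p * M) (int p * w + int (Suc i) * int M))"
    unfolding q by (rule sum.lessThan_Suc_shift)
  also have "tan_pi_frac (p * M) (int p * w + int 0 * int M) = tan_pi_frac M w"
    using \<open>p \<ge> 2\<close> by (simp add: tan_pi_frac_mult_level)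
  finally have "real p * tan_pi_frac M (int p * w) - tan_pi_frac M w
      = (\<Sum>i<q. tan_pi_frac (p * M) (int p * w + int (Suc i) * int M))" by simp
  also have "\<dots> \<in> star_span (p * M)"
  proof (intro star_span_sum tan_pi_frac_in_star_span[OF pM])
    fix i assume "i \<in> {..<q}"
    have "coprime (int p * w + int (Suc i) * int M) (int M)"
      using pw by (simp only: coprime_add_mult_left_iff)
    moreover have "\<not> int p dvd int p * w + int (Suc i) * int M"
    proof
      assume "int p dvd int p * w + int (Suc i) * int M"
      then have "int p dvd int (Suc i * M)"
        by (simp only: dvd_add_right_iff[OF dvd_triv_left] of_nat_mult)
      then have "p dvd Suc i * M" by (simp only: of_nat_dvd_iff)
      then have "p dvd Suc i" using \<open>prime p\<close> \<open>\<not> p dvd M\<close> prime_dvd_mult_iff by blast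
      with \<open>i \<in> {..<q}\<close> q show False by (auto dest: dvd_imp_le)
    qed
    then have "coprime (int p * w + int (Suc i) * int M) (int p)"
      using \<open>prime p\<close> by (simp add: prime_imp_coprime coprime_commute)
    ultimately show "coprime (int p * w + int (Suc i) * int M) (int (p * M))" by simp
  qed
  finally show ?thesis .
qed

lemma tan_pi_frac_in_star_span_odd_prime_coprime:
  assumes "prime p" and "odd p" and "\<not> p dvd M" and M: "M \<ge> 3" and u: "coprime u (int M)"
  shows "tan_pi_frac M u \<in> star_span (p * M)"
proof -
  have "p \<ge> 2" using \<open>prime p\<close> by (simp add: prime_ge_2_nat)
  have p_M: "coprime (int p) (int M)"
    using \<open>prime p\<close> \<open>\<not> p dvd M\<close> by (simp add: prime_imp_coprime)
  define L where "L = totient M"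
  define G where "G i = tan_pi_frac M (u * int p ^ i)" for i
  have "G 0 \<in> star_span (p * M)"
  proof (rule star_span_cycle[where c = "of_nat p" and L = L])
    fix i
    have "coprime (u * int p ^ i) (int M)" using u p_M by simp
    moreover have "G (Suc i) = tan_pi_frac M (int p * (u * int p ^ i))"
      by (simp add: G_def mult_ac)
    ultimately show "of_rat (of_nat p) * G (Suc i) - G i \<in> star_span (p * M)"
      using tan_pi_frac_odd_prime_relation[OF assms(1-4)] by (simp add: G_def)
  next
    have "[u * int p ^ L = u * 1] (mod int M)"
      unfolding L_def using euler_theorem_int[of p M] p_M by (intro cong_scalar_left) simp
    then show "G L = G 0" using M by (simp add: G_def tan_pi_frac_cong)
  next
    have "1 < (of_nat p :: rat) ^ L"
      using \<open>p \<ge> 2\<close> M by (intro one_less_power) (simp_all add: L_def)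
    then show "(of_nat p :: rat) ^ L \<noteq> 1" by simp
  qed
  then show ?thesis by (simp add: G_def)
qed

lemma tan_pi_frac_in_star_span_double_odd:
  assumes "odd M" and M: "M \<ge> 3" and u: "coprime u (int M)"
  shows "tan_pi_frac M u \<in> star_span (2 * M)"
proof -
  have two_M: "coprime 2 (int M)" using \<open>odd M\<close> by simp
  have "coprime (int M - 2 * u) (int (2 * M))"
  proof -
    have "coprime (- 2 * u + 1 * int M) (int M)"
      using u two_M by (simp only: coprime_add_mult_left_iff) simp
    then show ?thesis using \<open>odd M\<close> by simp
  qed
  moreover have "coprime (4 * u - int M) (int (2 * M))"
  proof -
    have "coprime (4 :: int) (int M)"
      using two_M coprime_power_left_iff[of 2 2 "int M"] by simp
    then have "coprime (4 * u + (- 1) * int M) (int M)"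
      using u by (simp only: coprime_add_mult_left_iff) simp
    then show ?thesis using \<open>odd M\<close> by simp
  qed
  ultimately have "tan_pi_frac (2 * M) (int M - 2 * u) + of_rat 2 * tan_pi_frac (2 * M) (4 * u - int M)
      \<in> star_span (2 * M)"
    using M by (intro star_span_add star_span_rat_mult tan_pi_frac_in_star_span) simp_all
  then show ?thesis
    using tan_pi_frac_reflection M not_dvd_double_if_coprime[OF M u] by simp
qed

lemma tan_pi_frac_in_star_span_quarter_shift:
  assumes n: "n \<ge> 2" and x: "coprime x (int n)" and "odd (x + int n)"
  shows "tan_pi_frac (2 * n) x \<in> star_span (4 * n)"
proof -
  have "\<not> int n dvd x"
  proof
    assume "int n dvd x"
    with x have "is_unit (int n)" by (metis coprime_absorb_left coprime_commute)
    with n show False by simp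
  qed
  have shift: "tan_pi_frac (4 * n) (x + int k * int n) \<in> star_span (4 * n)" if "odd k" for k
  proof (rule tan_pi_frac_in_star_span)
    have "odd (x + int k * int n)"
      using \<open>odd (x + int n)\<close> \<open>odd k\<close> by (auto elim!: oddE simp: algebra_simps)
    then show "coprime (x + int k * int n) (int (4 * n))"
      using x by (simp add: coprime_add_mult_left_iff coprime_four_if_odd)
  qed (use n in simp)
  have "tan_pi_frac (4 * n) (x + int 1 * int n) + tan_pi_frac (4 * n) (x + int 3 * int n) \<in> star_span (4 * n)"
    by (intro star_span_add shift) simp_all
  then have "of_rat 2 * tan_pi_frac (2 * n) x \<in> star_span (4 * n)"
    using tan_pi_frac_quarter_shifts[OF _ \<open>\<not> int n dvd x\<close>] n by simp
  then show ?thesis by (rule star_span_rat_mult_cancel) simp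
qed

lemma tan_pi_frac_twice_odd_relation:
  assumes "odd n" and n: "n \<ge> 3" and "odd y" and y: "coprime y (int n)"
  shows "2 * tan_pi_frac (2 * n) (2 * y + int n) - tan_pi_frac (2 * n) y \<in> star_span (4 * n)"
proof -
  have "\<not> int n dvd 2 * y + int n"
    using not_dvd_double_if_coprime[OF n y] by (simp add: dvd_add_left_iff)
  then have "2 * tan_pi_frac (2 * n) (2 * y + int n)
      = tan_pi_frac (4 * n) (2 * y + int n + int n) + tan_pi_frac (4 * n) (2 * y + int n + 3 * int n)"
    using n by (intro tan_pi_frac_quarter_shifts) simp_all
  also have "tan_pi_frac (4 * n) (2 * y + int n + int n) = tan_pi_frac (2 * n) (y + int n)"
    using tan_pi_frac_mult_level[of 2 "2 * n" "y + int n"] by (simp add: algebra_simps)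
  also have "tan_pi_frac (4 * n) (2 * y + int n + 3 * int n) = tan_pi_frac (2 * n) (y + int (2 * n) * 1)"
    using tan_pi_frac_mult_level[of 2 "2 * n" "y + int (2 * n) * 1"] by (simp add: algebra_simps)
  also have "\<dots> = tan_pi_frac (2 * n) y"
    using n by (intro tan_pi_frac_add_multiple) simp
  finally have "2 * tan_pi_frac (2 * n) (2 * y + int n) - tan_pi_frac (2 * n) y
      = tan_pi_frac (2 * n) (y + int n)" by simp
  also have "\<dots> \<in> star_span (4 * n)"
    using n y \<open>odd y\<close> \<open>odd n\<close> coprime_add_mult_left_iff[of y 1 "int n"]
    by (intro tan_pi_frac_in_star_span_quarter_shift) simp_all
  finally show ?thesis .
qed

lemma tan_pi_frac_in_star_span_double_twice_odd:
  assumes "odd n" and n: "n \<ge> 3" and u: "coprime u (int (2 * n))"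
  shows "tan_pi_frac (2 * n) u \<in> star_span (4 * n)"
proof -
  have "odd u" and u_n: "coprime u (int n)" using u by simp_all
  define L where "L = totient n"
  \<comment> \<open>The orbit of \<open>u\<close> under \<open>y \<mapsto> 2 * y + n\<close>; it returns to \<open>u\<close> modulo \<open>2 * n\<close> after \<open>totient n\<close> steps.\<close>
  define y where "y i = 2 ^ i * (u + int n) - int n" for i
  define G where "G i = tan_pi_frac (2 * n) (y i)" for i
  have "G 0 \<in> star_span (4 * n)"
  proof (rule star_span_cycle[where c = 2 and L = L])
    fix i
    have "odd (y i)" using \<open>odd u\<close> \<open>odd n\<close> by (simp add: y_def)
    moreover have "coprime (y i) (int n)"
    proof -
      have "y i = 2 ^ i * u + (2 ^ i - 1) * int n" by (simp add: y_def algebra_simps)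
      moreover have "coprime (2 ^ i * u) (int n)" using u_n \<open>odd n\<close> by simp
      ultimately show ?thesis by (simp add: coprime_add_mult_left_iff)
    qed
    moreover have "y (Suc i) = 2 * y i + int n" by (simp add: y_def algebra_simps)
    ultimately show "of_rat 2 * G (Suc i) - G i \<in> star_span (4 * n)"
      using tan_pi_frac_twice_odd_relation[OF \<open>odd n\<close> n] by (simp add: G_def)
  next
    have "int n dvd 2 ^ L - 1"
      using euler_theorem_int[of 2 n] \<open>odd n\<close> by (simp add: L_def cong_iff_dvd_diff)
    moreover have "2 dvd u + int n" using \<open>odd u\<close> \<open>odd n\<close> by simp
    ultimately have "int n * 2 dvd (2 ^ L - 1) * (u + int n)" by (rule mult_dvd_mono)
    then have "[y L = u] (mod int (2 * n))"
      by (simp add: y_def cong_iff_dvd_diff algebra_simps)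
    then show "G L = G 0" using n by (simp add: G_def y_def tan_pi_frac_cong)
  next
    have "1 < (2 :: rat) ^ L" using n by (intro one_less_power) (simp_all add: L_def)
    then show "(2 :: rat) ^ L \<noteq> 1" by simp
  qed
  then show ?thesis by (simp add: G_def y_def)
qed

lemma tan_pi_frac_in_star_span_double:
  assumes M: "M \<ge> 3" and u: "coprime u (int M)"
  shows "tan_pi_frac M u \<in> star_span (2 * M)"
proof (cases "odd M")
  case True
  then show ?thesis by (rule tan_pi_frac_in_star_span_double_odd[OF _ M u])
next
  case False
  then obtain n where M_n: "M = 2 * n" by (auto elim!: evenE)
  with M have "n \<ge> 2" by simp
  from u M_n have "odd u" and u_n: "coprime u (int n)" by simp_all
  show ?thesis
  proof (cases "odd n")
    case True
    with \<open>n \<ge> 2\<close> have "n \<ge> 3" by (cases "n = 2") auto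
    with True u M_n have "tan_pi_frac (2 * n) u \<in> star_span (4 * n)"
      by (intro tan_pi_frac_in_star_span_double_twice_odd) simp_all
    then show ?thesis by (simp add: M_n)
  next
    case False
    with \<open>odd u\<close> have "odd (u + int n)" by simp
    with \<open>n \<ge> 2\<close> u_n have "tan_pi_frac (2 * n) u \<in> star_span (4 * n)"
      by (rule tan_pi_frac_in_star_span_quarter_shift)
    then show ?thesis by (simp add: M_n)
  qed
qed

lemma tan_pi_frac_in_star_span_prime_multiple:
  assumes "prime p" and M: "M \<ge> 3" and u: "coprime u (int M)"
  shows "tan_pi_frac M u \<in> star_span (p * M)"
proof (cases "p = 2")
  case True
  with M u show ?thesis by (simp add: tan_pi_frac_in_star_span_double)
next
  case False
  with \<open>prime p\<close> have "odd p"
    using prime_ge_2_nat[of p] by (intro prime_odd_nat) auto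
  show ?thesis
  proof (cases "p dvd M")
    case True
    show ?thesis by (rule tan_pi_frac_in_star_span_odd_prime_dvd[OF \<open>prime p\<close> \<open>odd p\<close> True M u])
  next
    case False
    show ?thesis by (rule tan_pi_frac_in_star_span_odd_prime_coprime[OF \<open>prime p\<close> \<open>odd p\<close> False M u])
  qed
qed

lemma star_span_subset_prime_multiple:
  assumes "prime p" and "M \<ge> 3"
  shows "star_span M \<subseteq> star_span (p * M)"
proof
  fix r assume "r \<in> star_span M"
  then obtain c where r: "r = (\<Sum>j\<in>primitive_indices M. of_rat (c j) * star_point M j)"
    unfolding star_span_def by (elim rangeE)
  have "of_rat (c j) * star_point M j \<in> star_span (p * M)" if "j \<in> primitive_indices M" for j
  proof -
    from that have "gcd j M = 1" by (simp add: primitive_indices_def)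
    then have "coprime j M" by (rule gcd_eq_1_imp_coprime)
    then have "coprime (int j) (int M)" by simp
    with assms have "tan_pi_frac M (int j) \<in> star_span (p * M)"
      by (intro tan_pi_frac_in_star_span_prime_multiple)
    then show ?thesis by (simp add: star_point_eq_tan_pi_frac star_span_rat_mult)
  qed
  then show "r \<in> star_span (p * M)"
    unfolding r by (rule star_span_sum)
qed

lemma star_span_subset_multiple:
  assumes "M \<ge> 3" and "k > 0"
  shows "star_span M \<subseteq> star_span (M * k)"
  using \<open>k > 0\<close>
proof (induction k rule: prime_divisors_induct)
  case (factor p k)
  from \<open>0 < p * k\<close> have "k > 0" by simp
  then have "M \<le> M * k" by simp
  with \<open>M \<ge> 3\<close> have "M * k \<ge> 3" by linarith
  from \<open>k > 0\<close> have "star_span M \<subseteq> star_span (M * k)" by (rule factor.IH)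
  also have "\<dots> \<subseteq> star_span (p * (M * k))"
    by (rule star_span_subset_prime_multiple[OF \<open>prime p\<close> \<open>M * k \<ge> 3\<close>])
  finally show ?case by (simp add: mult_ac)
qed simp_all

lemma star_point_in_star_span_multiple_level:
  assumes M: "M \<ge> 3" and "h > 0" and "coprime k M"
  shows "star_point (M * h) (k * h) \<in> star_span (M * h)"
proof -
  have "star_point (M * h) (k * h) = tan_pi_frac (h * M) (int h * int k)"
    by (simp add: star_point_eq_tan_pi_frac mult_ac)
  also have "\<dots> = tan_pi_frac M (int k)"
    using \<open>h > 0\<close> by (rule tan_pi_frac_mult_level)
  also have "\<dots> \<in> star_span M"
    using M \<open>coprime k M\<close> by (intro tan_pi_frac_in_star_span) simp_all
  also have "star_span M \<subseteq> star_span (M * h)"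
    using M \<open>h > 0\<close> by (rule star_span_subset_multiple)
  finally show ?thesis .
qed

theorem lemma9:
  fixes N k :: nat
  assumes "N \<ge> 3" and "1 \<le> k" and "2 * k < N" and "gcd k N > 1"
  shows "\<exists>c :: nat \<Rightarrow> rat.
           star_point N k =
             (\<Sum>j\<in>{j. 1 \<le> j \<and> 2 * j < N \<and> gcd j N = 1}.
                of_rat (c j) * star_point N j)"
proof -
  define h where "h = gcd k N"
  define M where "M = N div h"
  have "h > 0" and N: "N = M * h" and k: "k = k div h * h"
    using assms by (simp_all add: h_def M_def)
  have "h \<le> k" using assms by (simp add: h_def gcd_le1_nat)
  with assms N have "2 * h < M * h" by linarith
  then have "M \<ge> 3" by simp
  moreover have "coprime (k div h) M"
    unfolding h_def M_def using assms by (intro div_gcd_coprime) simp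
  ultimately have "star_point N k \<in> star_span N"
    using star_point_in_star_span_multiple_level[OF _ \<open>h > 0\<close>] by (metis N k)
  then obtain c where "star_point N k = (\<Sum>j\<in>primitive_indices N. of_rat (c j) * star_point N j)"
    unfolding star_span_def by (elim rangeE)
  then show ?thesis unfolding primitive_indices_def by blast
qed

end
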